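(* Let $A=\prod_{i=1}^M\mathbb{Z}_{N_i}$ with each $N_i$ a prime power, let $\{t_i\}$ be numbers with $t_i\in\frac12\mathbb{Z}$ if $N_i$ is even and $t_i\in\mathbb{Z}$ if $N_i$ is odd, and let $\{p_{ij}\}_{i\neq j}$ be integers with $p_{ij}=p_{ji}$; set $p_{ii}=\lfloor t_i\rfloor$, $N_{ij}=\gcd(N_i,N_j)$, and $n_i=0$ if $t_i\in\mathbb{Z}$, $n_i=N_i/2$ if $t_i\in\frac12+\mathbb{Z}$. Consider the Abelian anyon theory $\mathcal{T}$ whose fusion group is the abelian group freely generated by elements $c_i,\varphi_i$ ($i=1,\dots,M$) subject only to $c_i^{N_i}=\varphi_i^{N_i}=1$, with exchange statistics determined (via $\theta(xy)=\theta(x)\theta(y)B_\theta(x,y)$, $B_\theta$ bimultiplicative and symmetric) by $\theta(c_i)=1$, $\theta(\varphi_i)=e^{2\pi i n_i/N_i^2}$, $B_\theta(c_i,c_j)=1$, $B_\theta(\varphi_i,c_j)=e^{2\pi i\delta_{ij}/N_i}$, $B_\theta(\varphi_i,\varphi_j)=1$ for $i\ne j$ (a stack of $M$ decoupled twisted quantum doubles). Define $a_i=\varphi_i\prod_{j=1}^{i}c_j^{p_{ji}N_j/N_{ij}}$. Then each $a_i$ has order $N_i$, the $a_i$ generate a subgroup isomorphic to $A$, and $$\theta(a_i)=e^{2\pi i t_i/N_i},\qquad B_\theta(a_i,a_j)=e^{2\pi i p_{ij}/N_{ij}}\ (i\neq j).$$ Hence the subtheory generated by $\{a_i\}$ is the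 Abelian anyon theory with fusion group $A$, generator statistics $t_i$ and mutual braidings $p_{ij}$; every Abelian anyon theory arises this way.
   Context: An Abelian anyon theory is a pair $(A,\theta)$ with $A$ a finite abelian group (anyon types under fusion) and $\theta:A\to U(1)$ the exchange statistics; the braiding phase is $B_\theta(a,b)=\theta(ab)/(\theta(a)\theta(b))$, required to be symmetric and bimultiplicative. Every Abelian anyon theory can be parameterized by a decomposition $A=\prod_i\mathbb{Z}_{N_i}$ into prime-power cyclic factors with generators $a_i$, $\theta(a_i)=e^{2\pi i t_i/N_i}$ ($t_i$ as stated) and $B_\theta(a_i,a_j)=e^{2\pi i p_{ij}/N_{ij}}$ for $i\ne j$. $\lfloor t\rfloor$ is the floor function. *)

theory Defs
  imports Complex_Main "HOL-Computational_Algebra.Primes"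
begin

text \<open>Elements of the fusion group of the stack of twisted quantum doubles,
  generated by c_i, phi_i (i < M) with c_i^{N_i} = phi_i^{N_i} = 1, are written
  additively as exponent vectors: an element (x, y) stands for
  prod_i c_i^{x i} phi_i^{y i}.  Two exponent vectors denote the same group
  element iff they agree componentwise modulo N_i for all i < M.\<close>

type_synonym elem = "(nat \<Rightarrow> int) \<times> (nat \<Rightarrow> int)"

definition el_add :: "elem \<Rightarrow> elem \<Rightarrow> elem" where
  "el_add g h = ((\<lambda>j. fst g j + fst h j), (\<lambda>j. snd g j + snd h j))"

definition el_neg :: "elem \<Rightarrow> elem" where
  "el_neg g = ((\<lambda>j. - fst g j), (\<lambda>j. - snd g j))"

definition el_zero :: elem where
  "el_zero = ((\<lambda>j. 0), (\<lambda>j. 0))"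

definition el_smult :: "int \<Rightarrow> elem \<Rightarrow> elem" where
  "el_smult k g = ((\<lambda>j. k * fst g j), (\<lambda>j. k * snd g j))"

definition el_comb :: "nat \<Rightarrow> (nat \<Rightarrow> int) \<Rightarrow> (nat \<Rightarrow> elem) \<Rightarrow> elem" where
  "el_comb M k g = ((\<lambda>j. \<Sum>i<M. k i * fst (g i) j), (\<lambda>j. \<Sum>i<M. k i * snd (g i) j))"

definition el_eq :: "(nat \<Rightarrow> nat) \<Rightarrow> nat \<Rightarrow> elem \<Rightarrow> elem \<Rightarrow> bool" where
  "el_eq N M g h \<longleftrightarrow> (\<forall>j<M. fst g j mod int (N j) = fst h j mod int (N j)
                               \<and> snd g j mod int (N j) = snd h j mod int (N j))"

definition el_order :: "(nat \<Rightarrow> nat) \<Rightarrow> nat \<Rightarrow> elem \<Rightarrow> nat" where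
  "el_order N M g = (LEAST k. 0 < k \<and> el_eq N M (el_smult (int k) g) el_zero)"

definition cgen :: "nat \<Rightarrow> elem" where
  "cgen i = ((\<lambda>j. if j = i then 1 else 0), (\<lambda>j. 0))"

definition phigen :: "nat \<Rightarrow> elem" where
  "phigen i = ((\<lambda>j. 0), (\<lambda>j. if j = i then 1 else 0))"

definition braid :: "(elem \<Rightarrow> complex) \<Rightarrow> elem \<Rightarrow> elem \<Rightarrow> complex" where
  "braid \<theta> a b = \<theta> (el_add a b) / (\<theta> a * \<theta> b)"

text \<open>theta is an Abelian anyon theory on the fusion group prod_{i<M}(Z_{N_i} x Z_{N_i}):
  a well-defined U(1)-valued function, with B_theta symmetric (automatic here) and
  bimultiplicative, and theta(a^{-1}) = theta(a) (the standard anyon-theory condition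
  making theta a quadratic function, theta(a^k) = theta(a)^{k^2}).\<close>
definition anyon_theory :: "(nat \<Rightarrow> nat) \<Rightarrow> nat \<Rightarrow> (elem \<Rightarrow> complex) \<Rightarrow> bool" where
  "anyon_theory N M \<theta> \<longleftrightarrow>
     (\<forall>g h. el_eq N M g h \<longrightarrow> \<theta> g = \<theta> h) \<and>
     (\<forall>g. norm (\<theta> g) = 1) \<and>
     (\<forall>a b. braid \<theta> a b = braid \<theta> b a) \<and>
     (\<forall>a b c. braid \<theta> (el_add a b) c = braid \<theta> a c * braid \<theta> b c) \<and>
     (\<forall>a b c. braid \<theta> a (el_add b c) = braid \<theta> a b * braid \<theta> a c) \<and>
     (\<forall>a. \<theta> (el_neg a) = \<theta> a)"

definition ephase :: "real \<Rightarrow> complex" where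
  "ephase x = exp (2 * of_real pi * \<i> * of_real x)"

definition nvals :: "(nat \<Rightarrow> nat) \<Rightarrow> (nat \<Rightarrow> real) \<Rightarrow> nat \<Rightarrow> real" where
  "nvals N t i = (if t i \<in> \<int> then 0 else real (N i) / 2)"

definition pfull :: "(nat \<Rightarrow> real) \<Rightarrow> (nat \<Rightarrow> nat \<Rightarrow> int) \<Rightarrow> nat \<Rightarrow> nat \<Rightarrow> int" where
  "pfull t p i j = (if i = j then \<lfloor>t i\<rfloor> else p i j)"

text \<open>a_i = phi_i * prod_{j \<le> i} c_j^{p_ji N_j / N_ij} (indices start at 0).\<close>
definition agen :: "(nat \<Rightarrow> nat) \<Rightarrow> (nat \<Rightarrow> real) \<Rightarrow> (nat \<Rightarrow> nat \<Rightarrow> int) \<Rightarrow> nat \<Rightarrow> elem" where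
  "agen N t p i = ((\<lambda>j. if j \<le> i then pfull t p j i * int (N j div gcd (N i) (N j)) else 0),
                   (\<lambda>j. if j = i then 1 else 0))"

end

theory Submission
  imports Defs
begin

text \<open>Since \<theta> is a quadratic function with bimultiplicative braiding, it is determined by its
  values and mutual braidings on the generators.  For the stack of twisted doubles this gives the
  closed form \<theta>(prod_k c_k^x_k phi_k^y_k) = e^(2 pi i Q) with
  Q = sum_k (y_k^2 n_k / N_k^2 + x_k y_k / N_k).  The element a_i has y = delta_i and x_i = floor t_i,
  so Q(a_i) = (n_i / N_i + floor t_i) / N_i = t_i / N_i, and the braiding of a_i with a_j is the single
  surviving cross term p_ij (N_i / N_ij) / N_i = p_ij / N_ij.  The phi-coordinates of prod_i a_i^k_i
  are the k_i, and its c-coordinates vanish once each N_i divides k_i because N_j divides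
  N_i N_j / N_ij; this gives the order of a_i and the independence of the a_i.\<close>

definition el_sum :: "nat set \<Rightarrow> (nat \<Rightarrow> elem) \<Rightarrow> elem" where
  "el_sum S g = ((\<lambda>j. \<Sum>i\<in>S. fst (g i) j), (\<lambda>j. \<Sum>i\<in>S. snd (g i) j))"

lemma el_sum_empty: "el_sum {} g = el_zero"
  by (simp add: el_sum_def el_zero_def)

lemma el_sum_insert: "finite S \<Longrightarrow> m \<notin> S \<Longrightarrow> el_sum (insert m S) g = el_add (g m) (el_sum S g)"
  by (simp add: el_sum_def el_add_def)

lemma el_add_zero_zero: "el_add el_zero el_zero = el_zero"
  by (simp add: el_add_def el_zero_def)

lemma el_add_neg_right: "el_add a (el_neg a) = el_zero"
  by (simp add: el_add_def el_zero_def el_neg_def)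

lemma el_smult_zero: "el_smult 0 a = el_zero"
  by (simp add: el_smult_def el_zero_def)

lemma el_smult_Suc: "el_smult (int (Suc n)) a = el_add (el_smult (int n) a) a"
  by (auto simp: el_smult_def el_add_def algebra_simps)

lemma el_smult_minus: "el_smult (- k) a = el_neg (el_smult k a)"
  by (simp add: el_smult_def el_neg_def)

lemma int_cases_nat_neg:
  fixes k :: int
  obtains n where "k = int n" | n where "k = - int n"
  by (metis nonneg_eq_int nle_le neg_0_le_iff_le minus_minus)

lemma ephase_0: "ephase 0 = 1"
  by (simp add: ephase_def)

lemma ephase_add: "ephase (a + b) = ephase a * ephase b"
  by (simp add: ephase_def exp_add[symmetric] algebra_simps)

lemma ephase_power_int: "ephase a powi k = ephase (of_int k * a)"
  by (simp add: ephase_def exp_power_int algebra_simps)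

lemma ephase_power: "ephase a ^ n = ephase (of_nat n * a)"
  using ephase_power_int[of a "int n"] by simp

lemma prod_ephase: "finite S \<Longrightarrow> (\<Prod>k\<in>S. ephase (f k)) = ephase (\<Sum>k\<in>S. f k)"
  by (induction S rule: finite_induct) (auto simp: ephase_0 ephase_add)

lemma half_integer_eq_floor_plus_half:
  fixes x :: real
  assumes "2 * x \<in> \<int>" and "x \<notin> \<int>"
  shows "x = of_int \<lfloor>x\<rfloor> + 1/2"
proof -
  obtain m where m: "2 * x = of_int m"
    using assms(1) Ints_cases by metis
  define d where "d = m - 2 * \<lfloor>x\<rfloor>"
  have d: "real_of_int d = 2 * (x - of_int \<lfloor>x\<rfloor>)"
    using m by (simp add: d_def)
  have "0 \<le> x - of_int \<lfloor>x\<rfloor>" "x - of_int \<lfloor>x\<rfloor> < 1"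
    by linarith+
  then have "real_of_int 0 \<le> real_of_int d" "real_of_int d < real_of_int 2"
    using d by simp_all
  then have "0 \<le> d" "d < 2"
    by (simp_all only: of_int_le_iff of_int_less_iff)
  moreover have "d \<noteq> 0"
    using d assms(2) by (metis Ints_of_int eq_iff_diff_eq_0 mult_eq_0_iff of_int_0 zero_neq_numeral)
  ultimately have "d = 1"
    by linarith
  then show ?thesis
    using d by simp
qed

locale abelian_anyon_theory =
  fixes N :: "nat \<Rightarrow> nat" and M :: nat and \<theta> :: "elem \<Rightarrow> complex"
  assumes anyon_theory: "anyon_theory N M \<theta>"
begin

lemma theta_nonzero: "\<theta> g \<noteq> 0"
  using anyon_theory unfolding anyon_theory_def by (metis norm_zero zero_neq_one)

lemma theta_add: "\<theta> (el_add a b) = \<theta> a * \<theta> b * braid \<theta> a b"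
  using theta_nonzero[of a] theta_nonzero[of b] by (simp add: braid_def)

lemma braid_nonzero: "braid \<theta> a b \<noteq> 0"
  using theta_nonzero by (simp add: braid_def)

lemma braid_add_left: "braid \<theta> (el_add a b) c = braid \<theta> a c * braid \<theta> b c"
  using anyon_theory unfolding anyon_theory_def by blast

lemma braid_add_right: "braid \<theta> a (el_add b c) = braid \<theta> a b * braid \<theta> a c"
  using anyon_theory unfolding anyon_theory_def by blast

lemma braid_commute: "braid \<theta> a b = braid \<theta> b a"
  using anyon_theory unfolding anyon_theory_def by blast

lemma theta_neg: "\<theta> (el_neg a) = \<theta> a"
  using anyon_theory unfolding anyon_theory_def by blast

lemma theta_cong: "el_eq N M g h \<Longrightarrow> \<theta> g = \<theta> h"
  using anyon_theory unfolding anyon_theory_def by blast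

lemma braid_zero_left: "braid \<theta> el_zero b = 1"
proof -
  have "braid \<theta> el_zero b = braid \<theta> el_zero b * braid \<theta> el_zero b"
    using braid_add_left[of el_zero el_zero b] by (simp add: el_add_zero_zero)
  then show ?thesis
    using braid_nonzero[of el_zero b] by simp
qed

lemma braid_neg_left: "braid \<theta> (el_neg a) b = inverse (braid \<theta> a b)"
proof -
  have "braid \<theta> a b * braid \<theta> (el_neg a) b = 1"
    using braid_add_left[of a "el_neg a" b] by (simp add: el_add_neg_right braid_zero_left)
  then show ?thesis
    using braid_nonzero[of a b] by (simp add: field_simps)
qed

lemma braid_smult_left: "braid \<theta> (el_smult k a) b = braid \<theta> a b powi k"
proof -
  have nat_case: "braid \<theta> (el_smult (int n) a) b = braid \<theta> a b ^ n" for n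
    by (induction n) (simp_all add: el_smult_zero braid_zero_left el_smult_Suc braid_add_left del: of_nat_Suc)
  show ?thesis
    by (cases k rule: int_cases_nat_neg) (simp_all add: nat_case el_smult_minus braid_neg_left power_int_minus)
qed

lemma braid_smult_right: "braid \<theta> a (el_smult k b) = braid \<theta> a b powi k"
  using braid_smult_left[of k b a] braid_commute by metis

lemma theta_zero: "\<theta> el_zero = 1"
proof -
  have "\<theta> el_zero = \<theta> el_zero * \<theta> el_zero"
    using theta_add[of el_zero el_zero] by (simp add: el_add_zero_zero braid_zero_left)
  then show ?thesis
    using theta_nonzero[of el_zero] by simp
qed

text \<open>This is where the axiom \<theta>(a^-1) = \<theta>(a) enters: 1 = \<theta>(a a^-1) = \<theta>(a)^2 / B(a,a).\<close>
lemma braid_self: "braid \<theta> a a = \<theta> a ^ 2"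
proof -
  have "1 = \<theta> a * \<theta> a * braid \<theta> a (el_neg a)"
    using theta_add[of a "el_neg a"] by (simp add: el_add_neg_right theta_zero theta_neg)
  moreover have "braid \<theta> a (el_neg a) = inverse (braid \<theta> a a)"
    using braid_neg_left braid_commute by metis
  ultimately show ?thesis
    using braid_nonzero[of a a] by (simp add: field_simps power2_eq_square)
qed

lemma theta_smult: "\<theta> (el_smult k a) = \<theta> a ^ (nat \<bar>k\<bar>^2)"
proof -
  have nat_case: "\<theta> (el_smult (int n) a) = \<theta> a ^ (n^2)" for n
  proof (induction n)
    case 0
    then show ?case by (simp add: el_smult_zero theta_zero)
  next
    case (Suc n)
    have "\<theta> (el_smult (int (Suc n)) a) = \<theta> a ^ (n^2) * \<theta> a * (\<theta> a ^ 2) ^ n"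
      by (simp only: el_smult_Suc theta_add Suc braid_smult_left braid_self power_int_of_nat)
    also have "\<dots> = \<theta> a ^ ((Suc n)^2)"
      by (simp add: power_add[symmetric] power_mult[symmetric] power2_eq_square algebra_simps)
    finally show ?case .
  qed
  show ?thesis
    by (cases k rule: int_cases_nat_neg) (simp_all add: nat_case el_smult_minus theta_neg)
qed

lemma braid_sum_left: "finite S \<Longrightarrow> braid \<theta> (el_sum S g) b = (\<Prod>i\<in>S. braid \<theta> (g i) b)"
  by (induction S rule: finite_induct) (simp_all add: el_sum_empty el_sum_insert braid_zero_left braid_add_left)

lemma theta_sum_of_mutually_transparent:
  assumes "finite S" and "\<And>i j. i \<in> S \<Longrightarrow> j \<in> S \<Longrightarrow> i \<noteq> j \<Longrightarrow> braid \<theta> (g i) (g j) = 1"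
  shows "\<theta> (el_sum S g) = (\<Prod>i\<in>S. \<theta> (g i))"
  using assms
proof (induction S rule: finite_induct)
  case empty
  then show ?case by (simp add: el_sum_empty theta_zero)
next
  case (insert m S)
  have "braid \<theta> (el_sum S g) (g m) = (\<Prod>i\<in>S. braid \<theta> (g i) (g m))"
    using braid_sum_left[OF insert.hyps(1)] .
  also have "\<dots> = 1"
    using insert.prems insert.hyps(2) by (intro prod.neutral) blast
  finally show ?case
    using insert by (simp add: el_sum_insert theta_add braid_commute)
qed

end

definition el_block :: "elem \<Rightarrow> nat \<Rightarrow> elem" where
  "el_block g k = el_add (el_smult (fst g k) (cgen k)) (el_smult (snd g k) (phigen k))"

lemma el_eq_sum_blocks: "el_eq N M g (el_sum {..<M} (el_block g))"
  unfolding el_eq_def el_sum_def el_block_def el_add_def el_smult_def cgen_def phigen_def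
  by (auto simp: sum.delta if_distrib[of "\<lambda>x. a * x" for a] cong: if_cong)

definition block_phase :: "(nat \<Rightarrow> nat) \<Rightarrow> (nat \<Rightarrow> real) \<Rightarrow> elem \<Rightarrow> nat \<Rightarrow> real" where
  "block_phase N t g k = of_int (snd g k)^2 * nvals N t k / real (N k)^2
                         + of_int (fst g k) * of_int (snd g k) / real (N k)"

definition stack_phase :: "(nat \<Rightarrow> nat) \<Rightarrow> (nat \<Rightarrow> real) \<Rightarrow> nat \<Rightarrow> elem \<Rightarrow> real" where
  "stack_phase N t M g = (\<Sum>k<M. block_phase N t g k)"

locale twisted_double_stack = abelian_anyon_theory +
  fixes t :: "nat \<Rightarrow> real"
  assumes theta_cgen: "\<forall>i<M. \<theta> (cgen i) = 1"
    and theta_phigen: "\<forall>i<M. \<theta> (phigen i) = ephase (nvals N t i / real (N i) ^ 2)"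
    and braid_cgen_cgen: "\<forall>i<M. \<forall>j<M. i \<noteq> j \<longrightarrow> braid \<theta> (cgen i) (cgen j) = 1"
    and braid_phigen_cgen: "\<forall>i<M. \<forall>j<M. braid \<theta> (phigen i) (cgen j)
                              = ephase ((if i = j then 1 else 0) / real (N i))"
    and braid_phigen_phigen: "\<forall>i<M. \<forall>j<M. i \<noteq> j \<longrightarrow> braid \<theta> (phigen i) (phigen j) = 1"
begin

lemma braid_blocks_distinct:
  assumes "i < M" "j < M" "i \<noteq> j"
  shows "braid \<theta> (el_block g i) (el_block g j) = 1"
proof -
  have "braid \<theta> (cgen i) (phigen j) = 1"
    using braid_phigen_cgen assms braid_commute by (metis ephase_0 div_0)
  moreover have "braid \<theta> (phigen i) (cgen j) = 1"
    using braid_phigen_cgen assms by (simp add: ephase_0)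
  ultimately show ?thesis
    unfolding el_block_def using assms braid_cgen_cgen braid_phigen_phigen
    by (simp add: braid_add_left braid_add_right braid_smult_left braid_smult_right)
qed

lemma theta_block:
  assumes "k < M"
  shows "\<theta> (el_block g k) = ephase (block_phase N t g k)"
proof -
  have "braid \<theta> (cgen k) (phigen k) = ephase (1 / real (N k))"
    using braid_phigen_cgen assms braid_commute by metis
  moreover have "\<theta> (el_block g k)
      = \<theta> (phigen k) ^ (nat \<bar>snd g k\<bar>^2) * (braid \<theta> (cgen k) (phigen k) powi fst g k) powi snd g k"
    unfolding el_block_def using assms theta_cgen
    by (simp add: theta_add theta_smult braid_smult_left braid_smult_right)
  moreover have "real (nat \<bar>snd g k\<bar>^2) = of_int (snd g k)^2"
    by simp
  ultimately show ?thesis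
    using assms theta_phigen
    by (simp add: block_phase_def ephase_power ephase_power_int ephase_add algebra_simps)
qed

theorem theta_eq_ephase_stack_phase: "\<theta> g = ephase (stack_phase N t M g)"
proof -
  have "\<theta> g = \<theta> (el_sum {..<M} (el_block g))"
    using theta_cong[OF el_eq_sum_blocks] .
  also have "\<dots> = (\<Prod>k<M. \<theta> (el_block g k))"
    by (rule theta_sum_of_mutually_transparent) (auto intro: braid_blocks_distinct)
  also have "\<dots> = (\<Prod>k<M. ephase (block_phase N t g k))"
    by (rule prod.cong) (simp_all add: theta_block)
  also have "\<dots> = ephase (stack_phase N t M g)"
    by (simp add: prod_ephase stack_phase_def)
  finally show ?thesis .
qed

lemma braid_eq_ephase_stack_phase:
  "braid \<theta> a b = ephase (stack_phase N t M (el_add a b) - stack_phase N t M a - stack_phase N t M b)"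
proof -
  have "\<theta> (el_add a b)
      = ephase (stack_phase N t M (el_add a b) - stack_phase N t M a - stack_phase N t M b) * (\<theta> a * \<theta> b)"
    by (simp add: theta_eq_ephase_stack_phase flip: ephase_add)
  then show ?thesis
    using theta_nonzero[of a] theta_nonzero[of b] by (simp add: braid_def)
qed

end

lemma snd_agen: "snd (agen N t p i) j = (if j = i then 1 else 0)"
  by (simp add: agen_def)

lemma dvd_mult_div_gcd_right: "(n :: nat) dvd m * (n div gcd m n)"
proof -
  have "m * (n div gcd m n) = n * (m div gcd m n)"
    by (simp add: div_mult_swap mult.commute)
  then show ?thesis
    by simp
qed

lemma dvd_N_times_fst_agen: "int (N j) dvd int (N i) * fst (agen N t p i) j"
proof -
  have "int (N j) dvd int (N i) * int (N j div gcd (N i) (N j))"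
    using dvd_mult_div_gcd_right[of "N j" "N i"] by (simp only: of_nat_mult[symmetric] int_dvd_int_iff)
  then show ?thesis
    unfolding agen_def by (auto simp: mult.left_commute[of "int (N i)"])
qed

lemma el_order_agen:
  assumes "i < M" and "0 < N i"
  shows "el_order N M (agen N t p i) = N i"
  unfolding el_order_def
proof (rule Least_equality)
  show "0 < N i \<and> el_eq N M (el_smult (int (N i)) (agen N t p i)) el_zero"
    using assms(2) dvd_N_times_fst_agen[of N _ i t p]
    by (auto simp: el_eq_def el_smult_def el_zero_def snd_agen)
next
  fix k assume k: "0 < k \<and> el_eq N M (el_smult (int k) (agen N t p i)) el_zero"
  then have "int k mod int (N i) = 0"
    using assms(1) unfolding el_eq_def el_smult_def el_zero_def by (force simp: snd_agen)
  then show "N i \<le> k"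
    using k by (simp add: zmod_int[symmetric] dvd_eq_mod_eq_0 dvd_imp_le)
qed

lemma el_comb_agen_eq_zero_iff:
  "el_eq N M (el_comb M k (agen N t p)) el_zero \<longleftrightarrow> (\<forall>i<M. int (N i) dvd k i)"
proof -
  have snd_comb: "snd (el_comb M k (agen N t p)) j = k j" if "j < M" for j
    using that by (simp add: el_comb_def snd_agen if_distrib[of "\<lambda>x. a * x" for a] cong: if_cong)
  have fst_comb: "int (N j) dvd fst (el_comb M k (agen N t p)) j"
    if k_dvd: "\<forall>i<M. int (N i) dvd k i" for j
    unfolding el_comb_def fst_conv
  proof (rule dvd_sum)
    fix i assume "i \<in> {..<M}"
    then obtain c where "k i = int (N i) * c"
      using k_dvd by (meson dvdE lessThan_iff)
    then have "k i * fst (agen N t p i) j = c * (int (N i) * fst (agen N t p i) j)"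
      by simp
    then show "int (N j) dvd k i * fst (agen N t p i) j"
      using dvd_N_times_fst_agen[of N j i t p] by (metis dvd_mult)
  qed
  show ?thesis
  proof
    assume "el_eq N M (el_comb M k (agen N t p)) el_zero"
    then show "\<forall>i<M. int (N i) dvd k i"
      using snd_comb by (simp add: el_eq_def el_zero_def dvd_eq_mod_eq_0)
  next
    assume "\<forall>i<M. int (N i) dvd k i"
    then show "el_eq N M (el_comb M k (agen N t p)) el_zero"
      using snd_comb fst_comb by (simp add: el_eq_def el_zero_def dvd_eq_mod_eq_0)
  qed
qed

lemma stack_phase_agen:
  assumes "i < M" and "0 < N i" and "2 * t i \<in> \<int>" and "odd (N i) \<longrightarrow> t i \<in> \<int>"
  shows "stack_phase N t M (agen N t p i) = t i / real (N i)"
proof -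
  have fst_agen: "fst (agen N t p i) i = \<lfloor>t i\<rfloor>"
    using assms(2) by (simp add: agen_def pfull_def)
  have "stack_phase N t M (agen N t p i) = (\<Sum>k<M. if k = i then nvals N t i / real (N i)^2
                                                   + of_int \<lfloor>t i\<rfloor> / real (N i) else 0)"
    unfolding stack_phase_def block_phase_def by (rule sum.cong) (auto simp: snd_agen fst_agen)
  also have "\<dots> = nvals N t i / real (N i)^2 + of_int \<lfloor>t i\<rfloor> / real (N i)"
    using assms(1) by simp
  also have "\<dots> = t i / real (N i)"
  proof (cases "t i \<in> \<int>")
    case True
    then show ?thesis by (auto simp: nvals_def elim!: Ints_cases)
  next
    case False
    have "nvals N t i / real (N i)^2 = (1/2) / real (N i)"
      using False assms(2) by (simp add: nvals_def power2_eq_square)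
    then have "nvals N t i / real (N i)^2 + of_int \<lfloor>t i\<rfloor> / real (N i)
             = (of_int \<lfloor>t i\<rfloor> + 1/2) / real (N i)"
      by (simp add: add_divide_distrib)
    also have "of_int \<lfloor>t i\<rfloor> + 1/2 = t i"
      using half_integer_eq_floor_plus_half[OF assms(3) False] by linarith
    finally show ?thesis .
  qed
  finally show ?thesis .
qed

text \<open>Of the two cross terms x_k y_k / N_k mixing a_i and a_j, the one at k = max i j vanishes
  because a_i has c-coordinates only up to index i.\<close>
lemma stack_phase_agen_add:
  assumes "i < M" "j < M" "i \<noteq> j" and "0 < N i" "0 < N j" and "p i j = p j i"
  shows "stack_phase N t M (el_add (agen N t p i) (agen N t p j))
       = stack_phase N t M (agen N t p i) + stack_phase N t M (agen N t p j)
         + real_of_int (p i j) / real (gcd (N i) (N j))"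
proof -
  let ?x = "\<lambda>u v. real_of_int (fst (agen N t p u) v)"
  have "stack_phase N t M (el_add (agen N t p i) (agen N t p j))
          - stack_phase N t M (agen N t p i) - stack_phase N t M (agen N t p j)
      = (\<Sum>k<M. (if k = j then ?x i j / real (N j) else 0) + (if k = i then ?x j i / real (N i) else 0))"
    unfolding stack_phase_def block_phase_def sum_subtractf[symmetric]
    using assms(3)
    by (intro sum.cong) (auto simp: snd_agen el_add_def field_simps power2_eq_square add_divide_distrib)
  also have "\<dots> = ?x i j / real (N j) + ?x j i / real (N i)"
    using assms(1,2) by (simp add: sum.distrib)
  also have "\<dots> = real_of_int (p i j) / real (gcd (N i) (N j))"
  proof (cases "i < j")
    case True
    then show ?thesis
      using assms(4) by (simp add: agen_def pfull_def real_of_nat_div gcd.commute)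
  next
    case False
    then show ?thesis
      using assms(3,5,6) by (simp add: agen_def pfull_def real_of_nat_div)
  qed
  finally show ?thesis
    by simp
qed

theorem mainTheorem9:
  fixes M :: nat and N :: "nat \<Rightarrow> nat" and t :: "nat \<Rightarrow> real"
    and p :: "nat \<Rightarrow> nat \<Rightarrow> int" and \<theta> :: "elem \<Rightarrow> complex"
  assumes N_pp: "\<forall>i<M. \<exists>q e. prime q \<and> 0 < e \<and> N i = q ^ e"
    and t_even: "\<forall>i<M. even (N i) \<longrightarrow> 2 * t i \<in> \<int>"
    and t_odd: "\<forall>i<M. odd (N i) \<longrightarrow> t i \<in> \<int>"
    and p_sym: "\<forall>i<M. \<forall>j<M. i \<noteq> j \<longrightarrow> p i j = p j i"
    and anyon: "anyon_theory N M \<theta>"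
    and th_c: "\<forall>i<M. \<theta> (cgen i) = 1"
    and th_phi: "\<forall>i<M. \<theta> (phigen i) = ephase (nvals N t i / real (N i) ^ 2)"
    and B_cc: "\<forall>i<M. \<forall>j<M. i \<noteq> j \<longrightarrow> braid \<theta> (cgen i) (cgen j) = 1"
    and B_phic: "\<forall>i<M. \<forall>j<M. braid \<theta> (phigen i) (cgen j)
                   = ephase ((if i = j then 1 else 0) / real (N i))"
    and B_phiphi: "\<forall>i<M. \<forall>j<M. i \<noteq> j \<longrightarrow> braid \<theta> (phigen i) (phigen j) = 1"
  shows "(\<forall>i<M. el_order N M (agen N t p i) = N i)
       \<and> (\<forall>k :: nat \<Rightarrow> int. el_eq N M (el_comb M k (agen N t p)) el_zero
              \<longleftrightarrow> (\<forall>i<M. int (N i) dvd k i))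
       \<and> (\<forall>i<M. \<theta> (agen N t p i) = ephase (t i / real (N i)))
       \<and> (\<forall>i<M. \<forall>j<M. i \<noteq> j \<longrightarrow>
            braid \<theta> (agen N t p i) (agen N t p j) = ephase (real_of_int (p i j) / real (gcd (N i) (N j))))"
proof -
  interpret twisted_double_stack N M \<theta> t
    using assms by unfold_locales
  have N_pos: "0 < N i" if "i < M" for i
    using N_pp that by (metis prime_gt_0_nat zero_less_power)
  have t_half: "2 * t i \<in> \<int>" if "i < M" for i
    using t_even t_odd that by (metis Ints_mult Ints_numeral)
  have "\<theta> (agen N t p i) = ephase (t i / real (N i))" if "i < M" for i
    using that N_pos t_half t_odd by (simp add: theta_eq_ephase_stack_phase stack_phase_agen)
  moreover have "braid \<theta> (agen N t p i) (agen N t p j) = ephase (real_of_int (p i j) / real (gcd (N i) (N j)))"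
    if "i < M" "j < M" "i \<noteq> j" for i j
    using that N_pos p_sym by (simp add: braid_eq_ephase_stack_phase stack_phase_agen_add)
  ultimately show ?thesis
    using N_pos el_order_agen el_comb_agen_eq_zero_iff by blast
qed

end
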